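(* Let $x$ be a grid function with $x_s\neq0$ at every node that satisfies the scheme (S) with $\check B=\frac{2(\cosh\tau-1)}{\tau^2}\,x$ (discretization for the parabolic bottom $b(x)=x^2/2$). Then at every node $$\Big(x\,\frac{e^{\hat t}-e^{t}}{\tau}-e^{t}x_t\Big)_{\check t}-\Big(e^{t}\big((\hat x_s\check x_s)^{-1}-\alpha^2x_s\big)\Big)_{\bar s}=0,$$ where $t$ is the time coordinate of the node and $\hat t=t+\tau$.
   Context: Fix mesh steps $\tau>0$, $h>0$ and a constant $\alpha\in\mathbb R$. A grid function is a real-valued function $f=f(t,s)$ on the uniform orthogonal mesh $\{(n\tau,kh): n,k\in\mathbb Z\}$; at the node $(n\tau,kh)$ the symbol $t$ denotes the number $n\tau$. Shifts: $\hat f=f(t+\tau,s)$, $\check f=f(t-\tau,s)$, $f_+=f(t,s+h)$, $f_-=f(t,s-h)$; a shift applied to a composite expression shifts the whole expression, including explicit occurrences of $t$ (e.g. $\hat x_s$ is $x_s$ evaluated at $(t+\tau,s)$). Differences: $f_t=(\hat f-f)/\tau$, $f_{\check t}=(f-\check f)/\tau$, $f_s=(f_+-f)/h$, $f_{\bar s}=(f-f_-)/h$; iterated differences compose, e.g. $x_{t\check t}=(x_t)_{\check t}=(\hat x-2x+\check x)/\tau^2$ and $x_{s\bar s}=(x_s)_{\bar s}=(x_+-2x+x_-)/h^2$. Given a grid function $x$ with $x_s\neq0$ everywhere and a grid function $\check B$ (an approximation of the bottom-slope term), the scheme (S) is the requirement that at every node $$x_{t\check t}-\alpha^2x_{s\bar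 s}+\Big(\frac{1}{\hat x_s\check x_s}\Big)_{\bar s}-\check B=0 .$$ *)

theory Defs
  imports Complex_Main
begin

text \<open>A grid function is a real function on the mesh nodes (n tau, k h), indexed by (n,k) in Z x Z.\<close>
type_synonym grid = "int \<Rightarrow> int \<Rightarrow> real"

definition dt :: "real \<Rightarrow> grid \<Rightarrow> grid" where
  "dt \<tau> f = (\<lambda>n k. (f (n+1) k - f n k) / \<tau>)"

definition dtb :: "real \<Rightarrow> grid \<Rightarrow> grid" where
  "dtb \<tau> f = (\<lambda>n k. (f n k - f (n-1) k) / \<tau>)"

definition ds :: "real \<Rightarrow> grid \<Rightarrow> grid" where
  "ds h f = (\<lambda>n k. (f n (k+1) - f n k) / h)"

definition dsb :: "real \<Rightarrow> grid \<Rightarrow> grid" where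
  "dsb h f = (\<lambda>n k. (f n k - f n (k-1)) / h)"

definition scheme_S :: "real \<Rightarrow> real \<Rightarrow> real \<Rightarrow> grid \<Rightarrow> grid \<Rightarrow> bool" where
  "scheme_S \<tau> h \<alpha> x Bc \<longleftrightarrow>
     (\<forall>n k. dtb \<tau> (dt \<tau> x) n k - \<alpha>^2 * dsb h (ds h x) n k
            + dsb h (\<lambda>n k. 1 / (ds h x (n+1) k * ds h x (n-1) k)) n k
            - Bc n k = 0)"

end

theory Submission
  imports Defs
begin

text \<open>The conservation law is $-e^t$ times the left-hand side of (S). The weight $e^t$ does not
  depend on $s$, so it passes through the space difference. In time, with $q = e^\tau$, the
  weighted flux has backward difference $-e^t\,(x_{t\check t} - (q + q^{-1} - 2)\,x/\tau^2)$,
  and $q + q^{-1} - 2 = 2(\cosh\tau - 1)$ is exactly the factor in $\check B$.\<close>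

lemma dsb_scaled_diff:
  "dsb h (\<lambda>n k. c n * (f n k - a * g n k)) n k = c n * (dsb h f n k - a * dsb h g n k)"
  unfolding dsb_def by (cases "h = 0") (simp_all add: field_simps)

lemma exp_grid_succ:
  fixes \<tau> :: real
  shows "exp (of_int (n + 1) * \<tau>) = exp (of_int n * \<tau>) * exp \<tau>"
  by (simp add: distrib_right exp_add)

lemma exp_grid_pred:
  fixes \<tau> :: real
  shows "exp (of_int (n - 1) * \<tau>) = exp (of_int n * \<tau>) / exp \<tau>"
  by (simp add: left_diff_distrib exp_diff)

lemma two_cosh_minus_two:
  fixes \<tau> :: real
  shows "2 * (cosh \<tau> - 1) = exp \<tau> + 1 / exp \<tau> - 2"
proof -
  have "cosh \<tau> = (exp \<tau> + 1 / exp \<tau>) / 2"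
    by (simp add: cosh_def exp_minus field_simps)
  then show ?thesis by simp
qed

lemma dtb_exp_weighted_flux:
  fixes x :: grid
  assumes "\<tau> \<noteq> 0"
  shows "dtb \<tau> (\<lambda>n k. x n k * (exp (of_int (n+1) * \<tau>) - exp (of_int n * \<tau>)) / \<tau>
                     - exp (of_int n * \<tau>) * dt \<tau> x n k) n k
       = - exp (of_int n * \<tau>) * (dtb \<tau> (dt \<tau> x) n k - 2 * (cosh \<tau> - 1) / \<tau>^2 * x n k)"
  using assms
  unfolding dtb_def dt_def exp_grid_succ exp_grid_pred two_cosh_minus_two
  by (simp add: field_simps power2_eq_square)

theorem mainTheorem5:
  fixes \<tau> h \<alpha> :: real and x :: grid
  assumes "\<tau> > 0" and "h > 0"
    and "\<forall>n k. ds h x n k \<noteq> 0"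
    and "scheme_S \<tau> h \<alpha> x (\<lambda>n k. 2 * (cosh \<tau> - 1) / \<tau>^2 * x n k)"
  shows "\<forall>n k.
    dtb \<tau> (\<lambda>n k. x n k * (exp (of_int (n+1) * \<tau>) - exp (of_int n * \<tau>)) / \<tau>
                   - exp (of_int n * \<tau>) * dt \<tau> x n k) n k
  - dsb h (\<lambda>n k. exp (of_int n * \<tau>) *
                 (1 / (ds h x (n+1) k * ds h x (n-1) k) - \<alpha>^2 * ds h x n k)) n k = 0"
proof (intro allI)
  fix n k
  have "dtb \<tau> (dt \<tau> x) n k - \<alpha>^2 * dsb h (ds h x) n k
      + dsb h (\<lambda>n k. 1 / (ds h x (n+1) k * ds h x (n-1) k)) n k
      - 2 * (cosh \<tau> - 1) / \<tau>^2 * x n k = 0"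
    using assms(4) unfolding scheme_S_def by blast
  then show "dtb \<tau> (\<lambda>n k. x n k * (exp (of_int (n+1) * \<tau>) - exp (of_int n * \<tau>)) / \<tau>
                   - exp (of_int n * \<tau>) * dt \<tau> x n k) n k
    - dsb h (\<lambda>n k. exp (of_int n * \<tau>) *
                 (1 / (ds h x (n+1) k * ds h x (n-1) k) - \<alpha>^2 * ds h x n k)) n k = 0"
    unfolding dtb_exp_weighted_flux[OF less_imp_neq[OF assms(1), symmetric]] dsb_scaled_diff
    by algebra
qed

end
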